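(* For the hypergeometric weights described in the context, with $\phi:=(\vartheta S)S^{-1}$, $T_{-}:=(\Lambda^\top)^2\gamma+\Lambda^\top\beta$ and $T_{+}:=T-T_-=\alpha+\Lambda$, the Lax equation holds: \[ \vartheta T=[\phi,T]=[T_{+},T]. \]
   Context: Weights on $\mathbb N_0$: $w^{(a)}(k)=\frac{(b^{(a)}_1)_k\cdots(b^{(a)}_{M^{(a)}})_k}{(c_1)_k\cdots(c_N)_k}\frac{(\eta^{(a)})^k}{k!}$, $a\in\{1,2\}$, convergent series. Moment matrix (indices from 0): $\mathscr M_{n,2m}=\sum_k k^{n+m}w^{(1)}(k)$, $\mathscr M_{n,2m+1}=\sum_k k^{n+m}w^{(2)}(k)$, with all leading principal minors nonzero, so $\mathscr M=S^{-1}H\tilde S^{-\top}$ ($S,\tilde S$ lower unitriangular, $H$ diagonal), depending on $(\eta^{(1)},\eta^{(2)})$. $\Lambda$ has ones on the first superdiagonal; $T=S\Lambda S^{-1}=(\Lambda^\top)^2\gamma+\Lambda^\top\beta+\alpha+\Lambda$ with diagonal $\alpha,\beta,\gamma$. $\vartheta=\eta^{(1)}\partial/\partial\eta^{(1)}+\eta^{(2)}\partial/\partial\eta^{(2)}$; $[X,Y]=XY-YX$. *)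

theory Defs
  imports Complex_Main "HOL-Analysis.Derivative" "Jordan_Normal_Form.Determinant"
begin

text \<open>Semi-infinite matrices indexed from 0 are functions nat => nat => real.
The product is the (entrywise) series; in every product used below each
series has only finitely many nonzero terms.\<close>

type_synonym imat = "nat \<Rightarrow> nat \<Rightarrow> real"

definition mmul :: "imat \<Rightarrow> imat \<Rightarrow> imat" where
  "mmul A B = (\<lambda>i j. \<Sum>k. A i k * B k j)"

definition madd :: "imat \<Rightarrow> imat \<Rightarrow> imat" where
  "madd A B = (\<lambda>i j. A i j + B i j)"

definition msub :: "imat \<Rightarrow> imat \<Rightarrow> imat" where
  "msub A B = (\<lambda>i j. A i j - B i j)"

definition mtr :: "imat \<Rightarrow> imat" where
  "mtr A = (\<lambda>i j. A j i)"

definition idm :: imat where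
  "idm = (\<lambda>i j. if i = j then 1 else 0)"

definition Lam :: imat where
  "Lam = (\<lambda>i j. if j = Suc i then 1 else 0)"

definition comm :: "imat \<Rightarrow> imat \<Rightarrow> imat" where
  "comm X Y = msub (mmul X Y) (mmul Y X)"

definition lower_unitri :: "imat \<Rightarrow> bool" where
  "lower_unitri A \<longleftrightarrow> (\<forall>i j. i < j \<longrightarrow> A i j = 0) \<and> (\<forall>i. A i i = 1)"

definition diagonal_m :: "imat \<Rightarrow> bool" where
  "diagonal_m A \<longleftrightarrow> (\<forall>i j. i \<noteq> j \<longrightarrow> A i j = 0)"

definition linv :: "imat \<Rightarrow> imat" where
  "linv A = (THE L. lower_unitri L \<and> mmul A L = idm)"

definition hweight :: "real list \<Rightarrow> real list \<Rightarrow> real \<Rightarrow> nat \<Rightarrow> real" where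
  "hweight bs cs eta k =
     (\<Prod>b\<leftarrow>bs. pochhammer b k) / (\<Prod>c\<leftarrow>cs. pochhammer c k) * eta ^ k / fact k"

definition moment :: "real list \<Rightarrow> real list \<Rightarrow> real list \<Rightarrow> real \<times> real \<Rightarrow> imat" where
  "moment bs1 bs2 cs eta = (\<lambda>n m.
     if even m then (\<Sum>k. real k ^ (n + m div 2) * hweight bs1 cs (fst eta) k)
     else (\<Sum>k. real k ^ (n + m div 2) * hweight bs2 cs (snd eta) k))"

definition lead_block :: "imat \<Rightarrow> nat \<Rightarrow> real mat" where
  "lead_block A n = mat n n (\<lambda>(i, j). A i j)"

definition theta :: "(real \<times> real \<Rightarrow> real) \<Rightarrow> real \<times> real \<Rightarrow> real" where
  "theta F eta = fst eta * deriv (\<lambda>x. F (x, snd eta)) (fst eta)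
               + snd eta * deriv (\<lambda>y. F (fst eta, y)) (snd eta)"

definition thetaM :: "(real \<times> real \<Rightarrow> imat) \<Rightarrow> real \<times> real \<Rightarrow> imat" where
  "thetaM A eta = (\<lambda>i j. theta (\<lambda>e. A e i j) eta)"

text \<open>T_- = (Lambda^T)^2 gamma + Lambda^T beta: the first two subdiagonals of T.\<close>
definition Tminus :: "imat \<Rightarrow> imat" where
  "Tminus T = (\<lambda>i j. if i = Suc j \<or> i = Suc (Suc j) then T i j else 0)"

definition Tplus :: "imat \<Rightarrow> imat" where
  "Tplus T = msub T (Tminus T)"

end

theory Submission
  imports Defs
begin

(* On the moments the Euler operator acts as multiplication of the weights by k, so
   theta M = Lam M. Differentiating S S^-1 = 1 gives theta (S^-1) = - S^-1 phi, and hence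
   theta T = [phi, T] for T = S Lam S^-1.
   For the second identity let R = S M = H St^-T, an upper triangular matrix whose diagonal
   entries are nonzero because the leading minors of M are. Then (phi + T) R = theta(S) M + S Lam M
   = theta (S M) is upper triangular, so phi + T is upper triangular; T R = S Lam M is R with its
   columns shifted by two (M_{n+1,m} = M_{n,m+2}), so T has only two subdiagonals; and phi is
   strictly lower triangular since S has unit diagonal. Hence phi = - T_-, T_+ = phi + T and
   [T_+, T] = [phi, T]. That S depends differentiably on eta follows from Cramer's rule. *)

section \<open>The Euler operator\<close>

(* theta is defined through deriv, which returns junk where a partial map is not
   differentiable; this predicate is the side condition for its calculus rules. *)
definition partially_differentiable :: "(real \<times> real \<Rightarrow> real) \<Rightarrow> real \<times> real \<Rightarrow> bool" where
  "partially_differentiable F e \<longleftrightarrow>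
     (\<lambda>x. F (x, snd e)) field_differentiable at (fst e) \<and>
     (\<lambda>y. F (fst e, y)) field_differentiable at (snd e)"

lemma partially_differentiable_const [simp]: "partially_differentiable (\<lambda>p. c) e"
  by (simp add: partially_differentiable_def)

lemma partially_differentiable_uminus:
  "partially_differentiable F e \<Longrightarrow> partially_differentiable (\<lambda>p. - F p) e"
  by (simp add: partially_differentiable_def field_differentiable_minus)

lemma partially_differentiable_mult:
  "partially_differentiable F e \<Longrightarrow> partially_differentiable G e \<Longrightarrow>
   partially_differentiable (\<lambda>p. F p * G p) e"
  by (simp add: partially_differentiable_def field_differentiable_mult)

lemma partially_differentiable_divide:
  "partially_differentiable F e \<Longrightarrow> partially_differentiable G e \<Longrightarrow> G e \<noteq> 0 \<Longrightarrow>
   partially_differentiable (\<lambda>p. F p / G p) e"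
  by (cases e) (simp add: partially_differentiable_def field_differentiable_divide)

lemma partially_differentiable_sum:
  "(\<And>a. a \<in> A \<Longrightarrow> partially_differentiable (F a) e) \<Longrightarrow>
   partially_differentiable (\<lambda>p. \<Sum>a\<in>A. F a p) e"
  by (simp add: partially_differentiable_def field_differentiable_sum)

lemma partially_differentiable_prod:
  "(\<And>a. a \<in> A \<Longrightarrow> partially_differentiable (F a) e) \<Longrightarrow>
   partially_differentiable (\<lambda>p. \<Prod>a\<in>A. F a p) e"
  by (induction A rule: infinite_finite_induct) (auto intro: partially_differentiable_mult)

lemma theta_const [simp]: "theta (\<lambda>p. c) e = 0"
  by (simp add: theta_def)

lemma theta_mult:
  "partially_differentiable F e \<Longrightarrow> partially_differentiable G e \<Longrightarrow>
   theta (\<lambda>p. F p * G p) e = theta F e * G e + F e * theta G e"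
  by (cases e) (simp add: partially_differentiable_def theta_def algebra_simps)

lemma theta_sum:
  "(\<And>a. partially_differentiable (F a) e) \<Longrightarrow>
   theta (\<lambda>p. \<Sum>a\<in>A. F a p) e = (\<Sum>a\<in>A. theta (F a) e)"
  by (simp add: partially_differentiable_def theta_def sum.distrib sum_distrib_left)

lemma theta_fst:
  "theta (\<lambda>p. f (fst p)) e = fst e * deriv f (fst e)"
  by (simp add: theta_def)

lemma theta_snd:
  "theta (\<lambda>p. f (snd p)) e = snd e * deriv f (snd e)"
  by (simp add: theta_def)

lemma partially_differentiable_fst_iff:
  "partially_differentiable (\<lambda>p. f (fst p)) e \<longleftrightarrow> f field_differentiable at (fst e)"
  by (simp add: partially_differentiable_def)

lemma partially_differentiable_snd_iff:
  "partially_differentiable (\<lambda>p. f (snd p)) e \<longleftrightarrow> f field_differentiable at (snd e)"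
  by (simp add: partially_differentiable_def)

lemma eventually_nhds_horizontal:
  fixes e :: "'a::topological_space \<times> 'b::topological_space"
  assumes "eventually P (nhds e)"
  shows "eventually (\<lambda>x. P (x, snd e)) (nhds (fst e))"
proof -
  have "filterlim (\<lambda>x. (x, snd e)) (nhds (fst e, snd e)) (nhds (fst e))"
    by (intro tendsto_Pair filterlim_ident tendsto_const)
  then show ?thesis using assms by (simp add: filterlim_iff)
qed

lemma eventually_nhds_vertical:
  fixes e :: "'a::topological_space \<times> 'b::topological_space"
  assumes "eventually P (nhds e)"
  shows "eventually (\<lambda>y. P (fst e, y)) (nhds (snd e))"
proof -
  have "filterlim (\<lambda>y. (fst e, y)) (nhds (fst e, snd e)) (nhds (snd e))"
    by (intro tendsto_Pair filterlim_ident tendsto_const)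
  then show ?thesis using assms by (simp add: filterlim_iff)
qed

lemma field_differentiable_cong_ev:
  fixes f g :: "'a::real_normed_field \<Rightarrow> 'a"
  assumes "eventually (\<lambda>x. f x = g x) (nhds x)"
  shows "f field_differentiable at x \<longleftrightarrow> g field_differentiable at x"
  using DERIV_cong_ev[OF refl assms refl, of "deriv f x"] deriv_cong_ev[OF assms refl]
    DERIV_deriv_iff_field_differentiable[of f x] DERIV_deriv_iff_field_differentiable[of g x]
  by simp

lemma theta_cong_ev:
  assumes "eventually (\<lambda>p. F p = G p) (nhds e)"
  shows "theta F e = theta G e"
  unfolding theta_def
  using deriv_cong_ev[OF eventually_nhds_horizontal[OF assms] refl]
    deriv_cong_ev[OF eventually_nhds_vertical[OF assms] refl]
  by simp

lemma partially_differentiable_cong_ev: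
  assumes "eventually (\<lambda>p. F p = G p) (nhds e)"
  shows "partially_differentiable F e \<longleftrightarrow> partially_differentiable G e"
  unfolding partially_differentiable_def
  using field_differentiable_cong_ev[OF eventually_nhds_horizontal[OF assms]]
    field_differentiable_cong_ev[OF eventually_nhds_vertical[OF assms]]
  by simp

lemma eventually_nhds_open:
  "open U \<Longrightarrow> e \<in> U \<Longrightarrow> (\<And>p. p \<in> U \<Longrightarrow> P p) \<Longrightarrow> eventually P (nhds e)"
  using eventually_nhds_in_open eventually_mono by metis

lemma theta_locally_const:
  assumes "open U" "e \<in> U" "\<And>p. p \<in> U \<Longrightarrow> F p = c"
  shows "theta F e = 0"
proof -
  have "eventually (\<lambda>p. F p = c) (nhds e)" using assms by (rule eventually_nhds_open)
  then show ?thesis by (simp add: theta_cong_ev)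
qed

lemma partially_differentiable_locally_const:
  assumes "open U" "e \<in> U" "\<And>p. p \<in> U \<Longrightarrow> F p = c"
  shows "partially_differentiable F e"
proof -
  have "eventually (\<lambda>p. F p = c) (nhds e)" using assms by (rule eventually_nhds_open)
  then show ?thesis by (simp add: partially_differentiable_cong_ev)
qed

section \<open>Moments of hypergeometric weights\<close>

lemma power_series_euler_deriv:
  fixes c :: "nat \<Rightarrow> real"
  assumes sum_K: "summable (\<lambda>n. c n * K ^ n)" and x_K: "\<bar>x\<bar> < \<bar>K\<bar>"
  shows "(\<lambda>x. \<Sum>n. c n * x ^ n) field_differentiable at x"
    and "x * deriv (\<lambda>x. \<Sum>n. c n * x ^ n) x = (\<Sum>n. real n * c n * x ^ n)"
proof -
  have D: "DERIV (\<lambda>x. \<Sum>n. c n * x ^ n) x :> (\<Sum>n. diffs c n * x ^ n)"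
    using termdiffs_strong[OF sum_K] x_K by simp
  then show "(\<lambda>x. \<Sum>n. c n * x ^ n) field_differentiable at x"
    by (auto simp: field_differentiable_def)
  have "summable (\<lambda>n. diffs c n * x ^ n)"
    by (rule termdiff_converges[of x "\<bar>K\<bar>"]) (use x_K powser_inside[OF sum_K] in auto)
  then have "(\<lambda>n. x * (real n * c n * x ^ (n - Suc 0))) sums (x * (\<Sum>n. diffs c n * x ^ n))"
    by (intro sums_mult diffs_equiv)
  moreover have "x * (real n * c n * x ^ (n - Suc 0)) = real n * c n * x ^ n" for n
    by (cases n) simp_all
  ultimately show "x * deriv (\<lambda>x. \<Sum>n. c n * x ^ n) x = (\<Sum>n. real n * c n * x ^ n)"
    using DERIV_imp_deriv[OF D] by (simp add: sums_iff)
qed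

lemma hweight_eq_power: "hweight bs cs x k = hweight bs cs 1 k * x ^ k"
  by (simp add: hweight_def)

lemma moment_series_euler_deriv:
  assumes "eventually (\<lambda>x. \<forall>q. summable (\<lambda>k. real k ^ q * hweight bs cs x k)) (nhds x0)"
  shows "(\<lambda>x. \<Sum>k. real k ^ p * hweight bs cs x k) field_differentiable at x0"
    and "x0 * deriv (\<lambda>x. \<Sum>k. real k ^ p * hweight bs cs x k) x0
           = (\<Sum>k. real k ^ Suc p * hweight bs cs x0 k)"
proof -
  obtain r where r: "r > 0" "\<And>x. dist x x0 < r \<Longrightarrow> \<forall>q. summable (\<lambda>k. real k ^ q * hweight bs cs x k)"
    using assms by (auto simp: eventually_nhds_metric)
  define a where "a = hweight bs cs 1"
  have series: "real k ^ q * hweight bs cs x k = (real k ^ q * a k) * x ^ k" for q x k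
    by (simp add: a_def hweight_eq_power[of _ _ x] mult.assoc)
  define K where "K = (if x0 \<ge> 0 then x0 + r / 2 else x0 - r / 2)"
  have "dist K x0 < r" and x0_K: "\<bar>x0\<bar> < \<bar>K\<bar>" using r(1) by (auto simp: K_def dist_real_def)
  then have sum_K: "summable (\<lambda>k. (real k ^ p * a k) * K ^ k)"
    using r(2) by (simp add: series[symmetric])
  show "(\<lambda>x. \<Sum>k. real k ^ p * hweight bs cs x k) field_differentiable at x0"
    using power_series_euler_deriv(1)[OF sum_K x0_K] by (simp add: series)
  show "x0 * deriv (\<lambda>x. \<Sum>k. real k ^ p * hweight bs cs x k) x0
          = (\<Sum>k. real k ^ Suc p * hweight bs cs x0 k)"
    using power_series_euler_deriv(2)[OF sum_K x0_K] by (simp add: series mult.assoc)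
qed

lemma theta_moment:
  fixes e0 :: "real \<times> real"
  assumes U: "open U" "e0 \<in> U"
    and conv1: "\<forall>e\<in>U. \<forall>q. summable (\<lambda>k. real k ^ q * hweight bs1 cs (fst e) k)"
    and conv2: "\<forall>e\<in>U. \<forall>q. summable (\<lambda>k. real k ^ q * hweight bs2 cs (snd e) k)"
  shows "partially_differentiable (\<lambda>e. moment bs1 bs2 cs e n m) e0"
    and "theta (\<lambda>e. moment bs1 bs2 cs e n m) e0 = moment bs1 bs2 cs e0 (Suc n) m"
proof -
  define p where "p = n + m div 2"
  have near: "eventually (\<lambda>e. e \<in> U) (nhds e0)" using eventually_nhds_in_open[OF U] .
  have ev1: "eventually (\<lambda>x. \<forall>q. summable (\<lambda>k. real k ^ q * hweight bs1 cs x k)) (nhds (fst e0))"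
    using eventually_nhds_horizontal[OF near] by eventually_elim (use conv1 in auto)
  have ev2: "eventually (\<lambda>y. \<forall>q. summable (\<lambda>k. real k ^ q * hweight bs2 cs y k)) (nhds (snd e0))"
    using eventually_nhds_vertical[OF near] by eventually_elim (use conv2 in auto)
  define f where "f bs x = (\<Sum>k. real k ^ p * hweight bs cs x k)" for bs x
  have "moment bs1 bs2 cs e (Suc n) m =
          (if even m then \<Sum>k. real k ^ Suc p * hweight bs1 cs (fst e) k
           else \<Sum>k. real k ^ Suc p * hweight bs2 cs (snd e) k)" for e
    by (simp add: moment_def p_def)
  moreover note series1 = moment_series_euler_deriv[OF ev1, of p, folded f_def]
  moreover note series2 = moment_series_euler_deriv[OF ev2, of p, folded f_def]
  moreover have "(\<lambda>e. moment bs1 bs2 cs e n m) =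
                   (if even m then (\<lambda>e. f bs1 (fst e)) else (\<lambda>e. f bs2 (snd e)))"
    by (simp add: moment_def p_def f_def fun_eq_iff)
  ultimately show "partially_differentiable (\<lambda>e. moment bs1 bs2 cs e n m) e0"
    and "theta (\<lambda>e. moment bs1 bs2 cs e n m) e0 = moment bs1 bs2 cs e0 (Suc n) m"
    by (simp_all add: theta_fst theta_snd partially_differentiable_fst_iff partially_differentiable_snd_iff)
qed

section \<open>Row-finite matrices\<close>

definition row_bounded :: "imat \<Rightarrow> (nat \<Rightarrow> nat) \<Rightarrow> bool" where
  "row_bounded A N \<longleftrightarrow> (\<forall>i k. N i \<le> k \<longrightarrow> A i k = 0)"

definition row_finite :: "imat \<Rightarrow> bool" where
  "row_finite A \<longleftrightarrow> (\<exists>N. row_bounded A N)"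

lemma row_finiteI: "row_bounded A N \<Longrightarrow> row_finite A"
  unfolding row_finite_def by blast

lemma mmul_eq_finite_sum:
  assumes "\<And>k. N \<le> k \<Longrightarrow> A i k = 0"
  shows "mmul A B i j = (\<Sum>k<N. A i k * B k j)"
  unfolding mmul_def using assms by (intro suminf_finite) auto

lemma mmul_row_bounded: "row_bounded A N \<Longrightarrow> mmul A B i j = (\<Sum>k<N i. A i k * B k j)"
  by (rule mmul_eq_finite_sum) (auto simp: row_bounded_def)

lemma row_bounded_mmul:
  assumes A: "row_bounded A NA" and B: "row_bounded B NB"
  shows "row_bounded (mmul A B) (\<lambda>i. \<Sum>k<NA i. NB k)"
  unfolding row_bounded_def
proof (intro allI impI)
  fix i l assume l: "(\<Sum>k<NA i. NB k) \<le> l"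
  have "B k l = 0" if "k < NA i" for k
  proof -
    have "NB k \<le> (\<Sum>k<NA i. NB k)" using that by (intro member_le_sum) auto
    then show ?thesis using B l unfolding row_bounded_def by auto
  qed
  then show "mmul A B i l = 0" by (simp add: mmul_row_bounded[OF A])
qed

lemma row_finite_mmul: "row_finite A \<Longrightarrow> row_finite B \<Longrightarrow> row_finite (mmul A B)"
  unfolding row_finite_def using row_bounded_mmul by blast

lemma mmul_assoc:
  assumes "row_finite A" "row_finite B"
  shows "mmul (mmul A B) C = mmul A (mmul B C)"
proof (intro ext)
  fix i j
  obtain NA NB where A: "row_bounded A NA" and B: "row_bounded B NB"
    using assms row_finite_def by blast
  define K where "K = (\<Sum>k<NA i. NB k)"
  have BC: "mmul B C k j = (\<Sum>l<K. B k l * C l j)" if "k < NA i" for k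
  proof (rule mmul_eq_finite_sum)
    have "NB k \<le> K" unfolding K_def using that by (intro member_le_sum) auto
    then show "\<And>l. K \<le> l \<Longrightarrow> B k l = 0" using B by (auto simp: row_bounded_def)
  qed
  have "mmul (mmul A B) C i j = (\<Sum>l<K. (\<Sum>k<NA i. A i k * B k l) * C l j)"
    using mmul_row_bounded[OF row_bounded_mmul[OF A B]]
    by (simp add: K_def mmul_row_bounded[OF A])
  also have "\<dots> = (\<Sum>k<NA i. A i k * (\<Sum>l<K. B k l * C l j))"
    by (simp add: sum_distrib_left sum_distrib_right mult.assoc sum.swap[of _ "{..<K}"])
  also have "\<dots> = mmul A (mmul B C) i j"
    by (simp add: mmul_row_bounded[OF A] BC)
  finally show "mmul (mmul A B) C i j = mmul A (mmul B C) i j" .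
qed

lemma mmul_madd_left:
  assumes "row_finite A" "row_finite B"
  shows "mmul (madd A B) C = madd (mmul A C) (mmul B C)"
proof (intro ext)
  fix i j
  obtain NA NB where A: "row_bounded A NA" and B: "row_bounded B NB"
    using assms row_finite_def by blast
  let ?N = "max (NA i) (NB i)"
  have sum_N: "mmul X C i j = (\<Sum>k<?N. X i k * C k j)"
    if "X = A \<or> X = B \<or> X = madd A B" for X
    by (rule mmul_eq_finite_sum) (use that A B in \<open>auto simp: row_bounded_def madd_def\<close>)
  show "mmul (madd A B) C i j = madd (mmul A C) (mmul B C) i j"
    by (simp add: sum_N madd_def distrib_right sum.distrib)
qed

lemma mmul_madd_right:
  assumes "row_finite A"
  shows "mmul A (madd B C) = madd (mmul A B) (mmul A C)"
proof -
  obtain NA where "row_bounded A NA" using assms row_finite_def by blast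
  then show ?thesis by (simp add: fun_eq_iff mmul_row_bounded madd_def distrib_left sum.distrib)
qed

lemma mmul_uminus_right:
  assumes "row_finite A"
  shows "mmul A (\<lambda>i j. - B i j) = (\<lambda>i j. - mmul A B i j)"
proof -
  obtain NA where "row_bounded A NA" using assms row_finite_def by blast
  then show ?thesis by (simp add: fun_eq_iff mmul_row_bounded sum_negf)
qed

lemma row_bounded_lower_unitri: "lower_unitri A \<Longrightarrow> row_bounded A Suc"
  unfolding row_bounded_def lower_unitri_def by auto

lemma row_finite_lower_unitri: "lower_unitri A \<Longrightarrow> row_finite A"
  using row_bounded_lower_unitri row_finiteI by blast

lemma row_bounded_Lam: "row_bounded Lam (\<lambda>i. Suc (Suc i))"
  unfolding row_bounded_def Lam_def by auto

lemma row_finite_Lam: "row_finite Lam"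
  using row_bounded_Lam row_finiteI by blast

lemma mmul_idm_left [simp]: "mmul idm A = A"
proof (intro ext)
  fix i j
  have "mmul idm A i j = (\<Sum>k\<in>{i}. idm i k * A k j)"
    unfolding mmul_def by (intro suminf_finite) (auto simp: idm_def)
  then show "mmul idm A i j = A i j" by (simp add: idm_def)
qed

lemma mmul_idm_right [simp]: "mmul A idm = A"
proof (intro ext)
  fix i j
  have "mmul A idm i j = (\<Sum>k\<in>{j}. A i k * idm k j)"
    unfolding mmul_def by (intro suminf_finite) (auto simp: idm_def)
  then show "mmul A idm i j = A i j" by (simp add: idm_def)
qed

lemma Lam_mmul: "mmul Lam A i j = A (Suc i) j"
proof -
  have "mmul Lam A i j = (\<Sum>k\<in>{Suc i}. Lam i k * A k j)"
    unfolding mmul_def by (intro suminf_finite) (auto simp: Lam_def)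
  then show ?thesis by (simp add: Lam_def)
qed

lemma mmul_lower_unitri:
  assumes "lower_unitri A"
  shows "mmul A B i j = B i j + (\<Sum>k<i. A i k * B k j)"
  using assms by (simp add: mmul_row_bounded[OF row_bounded_lower_unitri[OF assms]] lower_unitri_def)

fun lower_inv :: "imat \<Rightarrow> nat \<Rightarrow> nat \<Rightarrow> real" where
  "lower_inv A i j =
     (if i < j then 0 else if i = j then 1 else - (\<Sum>k<i. A i k * lower_inv A k j))"

declare lower_inv.simps [simp del]

lemma lower_unitri_lower_inv: "lower_unitri (lower_inv A)"
  unfolding lower_unitri_def by (auto simp: lower_inv.simps)

lemma mmul_lower_inv:
  assumes "lower_unitri A"
  shows "mmul A (lower_inv A) = idm"
proof (intro ext)
  fix i j
  show "mmul A (lower_inv A) i j = idm i j"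
    using lower_inv.simps[of A i j] lower_inv.simps[of A _ j]
    by (cases "i \<le> j") (auto simp: mmul_lower_unitri[OF assms] idm_def)
qed

lemma lower_unitri_mmul_cancel_left:
  assumes "lower_unitri A" "mmul A X = mmul A Y"
  shows "X = Y"
proof (intro ext)
  fix i j
  show "X i j = Y i j"
  proof (induction i rule: less_induct)
    case (less i)
    have "(\<Sum>k<i. A i k * X k j) = (\<Sum>k<i. A i k * Y k j)"
      using less by (intro sum.cong) auto
    then show ?case
      using fun_cong[OF fun_cong[OF assms(2)], of i j] by (simp add: mmul_lower_unitri[OF assms(1)])
  qed
qed

lemma linv_eq_lower_inv:
  assumes "lower_unitri A"
  shows "linv A = lower_inv A"
  unfolding linv_def
proof (rule the_equality)
  show "lower_unitri (lower_inv A) \<and> mmul A (lower_inv A) = idm"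
    using lower_unitri_lower_inv mmul_lower_inv[OF assms] by blast
next
  fix L assume "lower_unitri L \<and> mmul A L = idm"
  then show "L = lower_inv A"
    using lower_unitri_mmul_cancel_left[OF assms] mmul_lower_inv[OF assms] by simp
qed

lemma lower_unitri_linv: "lower_unitri A \<Longrightarrow> lower_unitri (linv A)"
  by (simp add: linv_eq_lower_inv lower_unitri_lower_inv)

lemma mmul_linv_right: "lower_unitri A \<Longrightarrow> mmul A (linv A) = idm"
  by (simp add: linv_eq_lower_inv mmul_lower_inv)

lemma mmul_linv_left:
  assumes A: "lower_unitri A"
  shows "mmul (linv A) A = idm"
proof -
  let ?L = "linv A"
  have L: "lower_unitri ?L" using lower_unitri_linv[OF A] .
  have "A = mmul A (mmul ?L (linv ?L))" by (simp add: mmul_linv_right[OF L])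
  also have "\<dots> = mmul (mmul A ?L) (linv ?L)"
    by (rule mmul_assoc[symmetric]) (simp_all add: row_finite_lower_unitri A L)
  also have "\<dots> = linv ?L" by (simp add: mmul_linv_right[OF A])
  finally show ?thesis using mmul_linv_right[OF L] by simp
qed

section \<open>Differentiating matrix products and inverses\<close>

lemma thetaM_row_bounded:
  assumes U: "open U" "e0 \<in> U" and bounded: "\<forall>e\<in>U. row_bounded (A e) N"
  shows "row_bounded (thetaM A e0) N"
  unfolding row_bounded_def thetaM_def
proof (intro allI impI)
  fix i k assume "N i \<le> k"
  then show "theta (\<lambda>e. A e i k) e0 = 0"
    using bounded by (intro theta_locally_const[OF U]) (auto simp: row_bounded_def)
qed

lemma thetaM_lower_unitri:
  assumes U: "open U" "e0 \<in> U" and lower: "\<forall>e\<in>U. lower_unitri (S e)"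
  shows "row_bounded (thetaM S e0) Suc" and "thetaM S e0 i i = 0"
proof -
  show "row_bounded (thetaM S e0) Suc"
    using lower row_bounded_lower_unitri by (intro thetaM_row_bounded[OF U]) blast
  show "thetaM S e0 i i = 0"
    unfolding thetaM_def using lower by (intro theta_locally_const[OF U]) (simp add: lower_unitri_def)
qed

lemma
  assumes U: "open U" "e0 \<in> U" and bounded: "\<forall>e\<in>U. row_bounded (A e) N"
    and A: "\<And>i j. partially_differentiable (\<lambda>e. A e i j) e0"
    and B: "\<And>i j. partially_differentiable (\<lambda>e. B e i j) e0"
  shows partially_differentiable_mmul: "partially_differentiable (\<lambda>e. mmul (A e) (B e) i j) e0"
    and thetaM_mmul: "thetaM (\<lambda>e. mmul (A e) (B e)) e0
                        = madd (mmul (thetaM A e0) (B e0)) (mmul (A e0) (thetaM B e0))"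
proof -
  have near: "eventually (\<lambda>e. mmul (A e) (B e) i j = (\<Sum>k<N i. A e i k * B e k j)) (nhds e0)" for i j
    using bounded by (intro eventually_nhds_open[OF U]) (simp add: mmul_row_bounded)
  have diff: "partially_differentiable (\<lambda>e. A e i k * B e k j) e0" for i j k
    by (intro partially_differentiable_mult A B)
  then show "partially_differentiable (\<lambda>e. mmul (A e) (B e) i j) e0"
    by (simp add: partially_differentiable_cong_ev[OF near] partially_differentiable_sum)
  have "row_bounded (A e0) N" using bounded U by blast
  moreover have "row_bounded (thetaM A e0) N" by (rule thetaM_row_bounded[OF U bounded])
  ultimately show "thetaM (\<lambda>e. mmul (A e) (B e)) e0
                     = madd (mmul (thetaM A e0) (B e0)) (mmul (A e0) (thetaM B e0))"
    using diff
    by (simp add: fun_eq_iff thetaM_def madd_def theta_cong_ev[OF near] theta_sum theta_mult A B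
        mmul_row_bounded[of _ N] sum.distrib)
qed

lemma thetaM_const [simp]: "thetaM (\<lambda>e. C) e0 = (\<lambda>i j. 0)"
  by (simp add: thetaM_def)

lemma mmul_zero_right [simp]: "mmul A (\<lambda>i j. 0) = (\<lambda>i j. 0)"
  by (simp add: mmul_def)

lemma partially_differentiable_lower_inv:
  assumes S: "\<And>i j. partially_differentiable (\<lambda>e. S e i j) e0"
  shows "partially_differentiable (\<lambda>e. lower_inv (S e) i j) e0"
proof (induction i rule: less_induct)
  case (less i)
  have "partially_differentiable (\<lambda>e. - (\<Sum>k<i. S e i k * lower_inv (S e) k j)) e0"
    by (intro partially_differentiable_uminus partially_differentiable_sum
        partially_differentiable_mult S less) auto
  then show ?case
    unfolding lower_inv.simps[of _ i j] by (cases "i < j"; cases "i = j") simp_all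
qed

lemma partially_differentiable_linv:
  assumes U: "open U" "e0 \<in> U" and lower: "\<forall>e\<in>U. lower_unitri (S e)"
    and S: "\<And>i j. partially_differentiable (\<lambda>e. S e i j) e0"
  shows "partially_differentiable (\<lambda>e. linv (S e) i j) e0"
proof -
  have "eventually (\<lambda>e. linv (S e) i j = lower_inv (S e) i j) (nhds e0)"
    using lower by (intro eventually_nhds_open[OF U]) (simp add: linv_eq_lower_inv)
  from partially_differentiable_cong_ev[OF this] show ?thesis
    using partially_differentiable_lower_inv[of S e0, OF S] by simp
qed

lemma thetaM_linv:
  assumes U: "open U" "e0 \<in> U" and lower: "\<forall>e\<in>U. lower_unitri (S e)"
    and S: "\<And>i j. partially_differentiable (\<lambda>e. S e i j) e0"
  defines "L \<equiv> linv (S e0)"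
  shows "thetaM (\<lambda>e. linv (S e)) e0 = (\<lambda>i j. - mmul L (mmul (thetaM S e0) L) i j)"
proof -
  have S0: "lower_unitri (S e0)" and L0: "lower_unitri L"
    using lower U lower_unitri_linv by (auto simp: L_def)
  have bounded: "\<forall>e\<in>U. row_bounded (S e) Suc" using lower row_bounded_lower_unitri by blast
  have "thetaM (\<lambda>e. mmul (S e) (linv (S e))) e0 = (\<lambda>i j. 0)"
    using lower unfolding thetaM_def
    by (intro ext theta_locally_const[OF U]) (simp add: mmul_linv_right)
  then have SdL: "mmul (S e0) (thetaM (\<lambda>e. linv (S e)) e0) = (\<lambda>i j. - mmul (thetaM S e0) L i j)"
    using thetaM_mmul[OF U bounded S partially_differentiable_linv[OF U lower S]]
    by (simp add: fun_eq_iff madd_def L_def eq_neg_iff_add_eq_0 add.commute)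
  have "thetaM (\<lambda>e. linv (S e)) e0 = mmul (mmul L (S e0)) (thetaM (\<lambda>e. linv (S e)) e0)"
    by (simp add: L_def mmul_linv_left[OF S0])
  also have "\<dots> = mmul L (mmul (S e0) (thetaM (\<lambda>e. linv (S e)) e0))"
    by (rule mmul_assoc) (simp_all add: S0 L0 row_finite_lower_unitri)
  finally show ?thesis by (simp add: SdL mmul_uminus_right row_finite_lower_unitri[OF L0])
qed

lemma thetaM_dressing:
  assumes U: "open U" "e0 \<in> U" and lower: "\<forall>e\<in>U. lower_unitri (S e)"
    and S: "\<And>i j. partially_differentiable (\<lambda>e. S e i j) e0"
    and C: "row_finite C"
  defines "L \<equiv> linv (S e0)"
  shows "thetaM (\<lambda>e. mmul (mmul (S e) C) (linv (S e))) e0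
           = comm (mmul (thetaM S e0) L) (mmul (mmul (S e0) C) L)"
proof -
  define dS where "dS = thetaM S e0"
  obtain NC where NC: "row_bounded C NC" using C row_finite_def by blast
  have bounded: "\<forall>e\<in>U. row_bounded (S e) Suc" using lower row_bounded_lower_unitri by blast
  have bounded_SC: "\<forall>e\<in>U. row_bounded (mmul (S e) C) (\<lambda>i. \<Sum>k<Suc i. NC k)"
    using bounded row_bounded_mmul[OF _ NC] by blast
  have S0: "lower_unitri (S e0)" and L0: "lower_unitri L"
    using lower U lower_unitri_linv by (auto simp: L_def)
  have fin: "row_finite (S e0)" "row_finite L" "row_finite dS" "row_finite (mmul (S e0) C)"
    using S0 L0 C row_finite_lower_unitri row_finite_mmul
      row_finiteI[OF thetaM_row_bounded[OF U bounded]] by (auto simp: dS_def)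
  have dSC: "thetaM (\<lambda>e. mmul (S e) C) e0 = mmul dS C"
    using thetaM_mmul[OF U bounded S, of "\<lambda>e. C"] by (simp add: fun_eq_iff madd_def dS_def)
  have "thetaM (\<lambda>e. mmul (mmul (S e) C) (linv (S e))) e0
          = madd (mmul (mmul dS C) L) (mmul (mmul (S e0) C) (thetaM (\<lambda>e. linv (S e)) e0))"
    using thetaM_mmul[OF U bounded_SC partially_differentiable_mmul[OF U bounded S]
        partially_differentiable_linv[OF U lower S]]
    by (simp add: dSC L_def)
  also have "mmul (mmul (S e0) C) (thetaM (\<lambda>e. linv (S e)) e0)
               = (\<lambda>i j. - mmul (mmul (mmul (S e0) C) L) (mmul dS L) i j)"
    using thetaM_linv[OF U lower S] fin
    by (simp add: L_def dS_def mmul_uminus_right mmul_assoc)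
  also have "mmul (mmul dS C) L = mmul (mmul dS L) (mmul (mmul (S e0) C) L)"
  proof -
    have "mmul L (mmul (S e0) X) = X" for X
      using fin by (simp add: mmul_assoc[symmetric] L_def mmul_linv_left[OF S0])
    then show ?thesis using fin C by (simp add: mmul_assoc row_finite_mmul)
  qed
  finally show ?thesis by (simp add: comm_def msub_def madd_def fun_eq_iff dS_def)
qed

section \<open>The Gauss-Borel factorization\<close>

definition upper_tri :: "imat \<Rightarrow> bool" where
  "upper_tri A \<longleftrightarrow> (\<forall>i j. j < i \<longrightarrow> A i j = 0)"

lemma det_mat_eq_sum_permutations:
  "det (mat k k g) = (\<Sum>p | p permutes {0..<k}. of_int (sign p) * (\<Prod>i = 0..<k. g (i, p i)))"
proof -
  have "mat k k g $$ (i, p i) = g (i, p i)" if "p permutes {0..<k}" "i \<in> {0..<k}" for p i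
    using that permutes_in_image[of p "{0..<k}" i] by simp
  then show ?thesis by (simp add: det_def)
qed

lemma partially_differentiable_det:
  assumes "\<And>i j. partially_differentiable (\<lambda>e. F e i j) e0"
  shows "partially_differentiable (\<lambda>e. det (mat k k (\<lambda>(i, j). F e i j))) e0"
  unfolding det_mat_eq_sum_permutations
  by (intro partially_differentiable_sum partially_differentiable_mult
      partially_differentiable_prod partially_differentiable_const) (auto intro: assms)

lemma partially_differentiable_cofactor:
  assumes M: "\<And>i j. partially_differentiable (\<lambda>e. M e i j) e0"
  shows "partially_differentiable (\<lambda>e. cofactor (lead_block (M e) n) j m) e0"
proof -
  define skip where "skip l a = (if a < l then a else Suc a)" for l a :: nat
  have "mat_delete (lead_block A n) j m = mat (n - 1) (n - 1) (\<lambda>(a, b). A (skip j a) (skip m b))" for A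
    by (rule eq_matI) (auto simp: mat_delete_def lead_block_def skip_def)
  moreover have "partially_differentiable
      (\<lambda>e. (- 1) ^ (j + m) * det (mat (n - 1) (n - 1) (\<lambda>(a, b). M e (skip j a) (skip m b)))) e0"
    by (intro partially_differentiable_mult partially_differentiable_const
        partially_differentiable_det[of "\<lambda>e a b. M e (skip j a) (skip m b)"] M)
  ultimately show ?thesis by (simp add: cofactor_def)
qed

lemma lower_factor_cramer:
  assumes lower: "lower_unitri S" and upper: "upper_tri (mmul S M)" and j: "j < n"
  shows "S n j * det (lead_block M n) = (\<Sum>m<n. - M n m * cofactor (lead_block M n) j m)"
proof -
  let ?A = "lead_block M n"
  let ?B = "adj_mat ?A"
  have A: "?A \<in> carrier_mat n n" by (simp add: lead_block_def)
  have B: "?B \<in> carrier_mat n n" using adj_mat(1)[OF A] .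
  have row_n: "(\<Sum>k<n. S n k * M k m) = - M n m" if "m < n" for m
    using upper that mmul_lower_unitri[OF lower, of M n m] by (simp add: upper_tri_def)
  have AB: "(\<Sum>m<n. M k m * ?B $$ (m, j)) = (if k = j then det ?A else 0)" if k: "k < n" for k
  proof -
    have "(\<Sum>m<n. M k m * ?B $$ (m, j)) = (?A * ?B) $$ (k, j)"
      using k j A B
      by (auto simp: scalar_prod_def lead_block_def lessThan_atLeast0 intro!: sum.cong)
    also have "\<dots> = (det ?A \<cdot>\<^sub>m 1\<^sub>m n) $$ (k, j)" using adj_mat(2)[OF A] by simp
    finally show ?thesis using k j by simp
  qed
  have "(\<Sum>m<n. - M n m * ?B $$ (m, j)) = (\<Sum>m<n. \<Sum>k<n. S n k * (M k m * ?B $$ (m, j)))"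
    by (simp add: row_n[symmetric] sum_distrib_right mult.assoc)
  also have "\<dots> = (\<Sum>k<n. \<Sum>m<n. S n k * (M k m * ?B $$ (m, j)))"
    by (rule sum.swap)
  also have "\<dots> = (\<Sum>k<n. S n k * (\<Sum>m<n. M k m * ?B $$ (m, j)))"
    by (simp add: sum_distrib_left)
  also have "\<dots> = S n j * det ?A"
    using j by (simp add: AB if_distrib cong: if_cong)
  finally show ?thesis
    using j by (simp add: adj_mat_def lead_block_def)
qed

lemma partially_differentiable_lower_factor:
  assumes U: "open U" "e0 \<in> U"
    and lower: "\<forall>e\<in>U. lower_unitri (S e)" and upper: "\<forall>e\<in>U. upper_tri (mmul (S e) (M e))"
    and minors: "\<forall>e\<in>U. \<forall>n. det (lead_block (M e) n) \<noteq> 0"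
    and M: "\<And>i j. partially_differentiable (\<lambda>e. M e i j) e0"
  shows "partially_differentiable (\<lambda>e. S e n j) e0"
proof (cases "j < n")
  case True
  define G where "G e = (\<Sum>m<n. - M e n m * cofactor (lead_block (M e) n) j m)
                         / det (lead_block (M e) n)" for e
  have "S e n j = G e" if e: "e \<in> U" for e
  proof -
    have "S e n j * det (lead_block (M e) n) = (\<Sum>m<n. - M e n m * cofactor (lead_block (M e) n) j m)"
      by (rule lower_factor_cramer[OF _ _ True]) (use lower upper e in auto)
    then show ?thesis using minors e by (simp add: G_def eq_divide_eq)
  qed
  then have "eventually (\<lambda>e. S e n j = G e) (nhds e0)" by (rule eventually_nhds_open[OF U])
  moreover have "partially_differentiable (\<lambda>e. det (lead_block (M e) n)) e0"
    unfolding lead_block_def by (rule partially_differentiable_det[OF M])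
  then have "partially_differentiable G e0"
    unfolding G_def using minors U
    by (intro partially_differentiable_divide partially_differentiable_sum
        partially_differentiable_mult partially_differentiable_uminus
        partially_differentiable_cofactor M) auto
  ultimately show ?thesis using partially_differentiable_cong_ev[of "\<lambda>e. S e n j" G e0] by simp
next
  case False
  then show ?thesis
    using lower by (intro partially_differentiable_locally_const[OF U, of _ "if j = n then 1 else 0"])
      (auto simp: lower_unitri_def)
qed

lemma upper_tri_gauss_borel:
  assumes S: "lower_unitri S" and St: "lower_unitri St" and H: "diagonal_m H"
    and M: "M = mmul (mmul (linv S) H) (mtr (linv St))"
  shows "upper_tri (mmul S M)"
proof -
  have H_bounded: "row_bounded H Suc" using H by (auto simp: row_bounded_def diagonal_m_def)
  have fin: "row_finite S" "row_finite (linv S)" "row_finite H"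
    using S lower_unitri_linv row_finite_lower_unitri row_finiteI[OF H_bounded] by auto
  have "mmul S M = mmul (mmul (mmul S (linv S)) H) (mtr (linv St))"
    using fin by (simp add: M mmul_assoc row_finite_mmul)
  then have SM: "mmul S M = mmul H (mtr (linv St))" by (simp add: mmul_linv_right[OF S])
  have "mmul H (mtr (linv St)) i j = 0" if "j < i" for i j
    using H that lower_unitri_linv[OF St]
    by (simp add: mmul_row_bounded[OF H_bounded] diagonal_m_def lower_unitri_def mtr_def)
  then show ?thesis by (simp add: upper_tri_def SM)
qed

lemma lead_block_mmul:
  assumes "row_bounded A Suc"
  shows "lead_block (mmul A B) n = lead_block A n * lead_block B n"
proof (rule eq_matI)
  fix i j assume "i < dim_row (lead_block A n * lead_block B n)" "j < dim_col (lead_block A n * lead_block B n)"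
  then have i: "i < n" and j: "j < n" by (auto simp: lead_block_def)
  have "mmul A B i j = (\<Sum>k<n. A i k * B k j)"
    by (rule mmul_eq_finite_sum) (use assms i in \<open>auto simp: row_bounded_def\<close>)
  then show "lead_block (mmul A B) n $$ (i, j) = (lead_block A n * lead_block B n) $$ (i, j)"
    using i j by (auto simp: lead_block_def scalar_prod_def lessThan_atLeast0 intro!: sum.cong)
qed (auto simp: lead_block_def)

lemma diag_nonzero_of_minors:
  assumes S: "lower_unitri S" and upper: "upper_tri (mmul S M)"
    and minor: "det (lead_block M (Suc j)) \<noteq> 0"
  shows "mmul S M j j \<noteq> 0"
proof -
  let ?n = "Suc j"
  have carrier: "lead_block X ?n \<in> carrier_mat ?n ?n" for X by (simp add: lead_block_def)
  have "det (lead_block S ?n) = prod_list (diag_mat (lead_block S ?n))"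
    by (rule det_lower_triangular[OF _ carrier]) (use S in \<open>auto simp: lead_block_def lower_unitri_def\<close>)
  then have "det (lead_block S ?n) = 1"
    using S by (simp add: prod_list_diag_prod lead_block_def lower_unitri_def)
  then have "det (lead_block (mmul S M) ?n) \<noteq> 0"
    using minor lead_block_mmul[OF row_bounded_lower_unitri[OF S]] det_mult[OF carrier carrier] by simp
  moreover have "det (lead_block (mmul S M) ?n) = (\<Prod>k = 0..<?n. mmul S M k k)"
    using upper det_upper_triangular[OF _ carrier]
    by (simp add: upper_triangular_def upper_tri_def lead_block_def prod_list_diag_prod)
  ultimately show ?thesis by simp
qed

lemma lower_band_cancel_upper_tri:
  assumes R: "upper_tri R" "\<And>j. R j j \<noteq> 0"
    and XR: "\<And>i j. j + c < i \<Longrightarrow> mmul X R i j = 0"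
  shows "j + c < i \<Longrightarrow> X i j = 0"
proof (induction j rule: less_induct)
  case (less j)
  have "mmul X R i j = (\<Sum>k<Suc j. X i k * R k j)"
    using R(1) unfolding mmul_def by (intro suminf_finite) (auto simp: upper_tri_def)
  also have "\<dots> = X i j * R j j" using less by simp
  finally show ?case using XR[OF less.prems] R(2) by simp
qed

lemma thetaM_upper_tri:
  assumes U: "open U" "e0 \<in> U" and upper: "\<forall>e\<in>U. upper_tri (A e)"
  shows "upper_tri (thetaM A e0)"
  unfolding upper_tri_def thetaM_def
  using upper by (intro allI impI theta_locally_const[OF U]) (auto simp: upper_tri_def)

lemma dressed_Lam_lower_band:
  assumes S0: "lower_unitri S0"
    and R: "upper_tri (mmul S0 M)" "\<And>j. mmul S0 M j j \<noteq> 0"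
    and hankel: "\<And>k j. M (Suc k) j = M k (Suc (Suc j))"
    and ij: "j + 2 < i"
  shows "mmul (mmul S0 Lam) (linv S0) i j = 0"
proof (rule lower_band_cancel_upper_tri[OF R _ ij])
  fix i j :: nat assume ij: "j + 2 < i"
  have fin: "row_finite S0" "row_finite (linv S0)" "row_finite Lam"
    using S0 lower_unitri_linv row_finite_lower_unitri row_finite_Lam by auto
  have Lam_M: "mmul Lam M = (\<lambda>k j. M k (Suc (Suc j)))"
    by (simp add: fun_eq_iff Lam_mmul hankel)
  have "mmul (mmul (mmul S0 Lam) (linv S0)) (mmul S0 M) = mmul S0 (mmul Lam (mmul (mmul (linv S0) S0) M))"
    using fin by (simp add: mmul_assoc row_finite_mmul)
  also have "\<dots> = mmul S0 (\<lambda>k j. M k (Suc (Suc j)))"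
    using Lam_M by (simp add: mmul_linv_left[OF S0])
  finally show "mmul (mmul (mmul S0 Lam) (linv S0)) (mmul S0 M) i j = 0"
    using R(1) ij by (simp add: upper_tri_def mmul_def)
qed

lemma dressing_derivative_eq_neg_Tminus:
  assumes S0: "lower_unitri S0"
    and dS: "row_bounded dS Suc" "\<And>i. dS i i = 0"
    and R: "upper_tri (mmul S0 M)" "\<And>j. mmul S0 M j j \<noteq> 0"
    and hankel: "\<And>k j. M (Suc k) j = M k (Suc (Suc j))"
    and derivative: "upper_tri (madd (mmul dS M) (mmul S0 (mmul Lam M)))"
  shows "mmul dS (linv S0) = (\<lambda>i j. - Tminus (mmul (mmul S0 Lam) (linv S0)) i j)"
proof -
  define L where "L = linv S0"
  define T where "T = mmul (mmul S0 Lam) L"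
  have L: "lower_unitri L" using lower_unitri_linv[OF S0] by (simp add: L_def)
  have fin: "row_finite S0" "row_finite L" "row_finite dS" "row_finite Lam"
    using S0 L row_finite_lower_unitri row_finiteI[OF dS(1)] row_finite_Lam by auto
  have strictly_lower: "mmul dS L i j = 0" if "i \<le> j" for i j
    using dS L that by (auto simp: mmul_row_bounded[OF dS(1)] lower_unitri_def less_Suc_eq intro!: sum.neutral)
  have LS: "mmul L (mmul S0 X) = X" for X
    using fin by (simp add: mmul_assoc[symmetric] L_def mmul_linv_left[OF S0])
  have XR: "mmul (madd (mmul dS L) T) (mmul S0 M) = madd (mmul dS M) (mmul S0 (mmul Lam M))"
    using fin by (simp add: mmul_madd_left row_finite_mmul T_def mmul_assoc LS)
  have sum_zero: "madd (mmul dS L) T i j = 0" if "j < i" for i j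
  proof (rule lower_band_cancel_upper_tri[OF R, where c = 0])
    show "mmul (madd (mmul dS L) T) (mmul S0 M) i' j' = 0" if "j' + 0 < i'" for i' j'
      using derivative that unfolding XR upper_tri_def by simp
  qed (use that in simp)
  have band: "T i j = 0" if "j + 2 < i" for i j
    using dressed_Lam_lower_band[of S0 M j i] S0 R hankel that by (simp add: T_def L_def)
  show ?thesis
    unfolding L_def[symmetric] T_def[symmetric]
  proof (intro ext)
    fix i j
    show "mmul dS L i j = - Tminus T i j"
    proof (cases "j < i")
      case True
      then have "mmul dS L i j = - T i j"
        using sum_zero by (simp add: madd_def eq_neg_iff_add_eq_0)
      then show ?thesis using band[of j i] True by (auto simp: Tminus_def)
    qed (simp add: strictly_lower Tminus_def)
  qed
qed

lemma comm_madd_left_self: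
  assumes "row_finite X" "row_finite T"
  shows "comm (madd X T) T = comm X T"
  unfolding comm_def using assms
  by (simp only: mmul_madd_left mmul_madd_right) (simp add: msub_def madd_def fun_eq_iff)

theorem mainTheorem14:
  fixes bs1 bs2 cs :: "real list"
    and U :: "(real \<times> real) set"
    and S St H :: "real \<times> real \<Rightarrow> imat"
    and eta0 :: "real \<times> real"
  assumes cs_ok: "\<forall>c\<in>set cs. \<forall>n::nat. c \<noteq> - real n"
    and U_open: "open U" and eta0_in: "eta0 \<in> U"
    and conv1: "\<forall>eta\<in>U. \<forall>n. summable (\<lambda>k. real k ^ n * hweight bs1 cs (fst eta) k)"
    and conv2: "\<forall>eta\<in>U. \<forall>n. summable (\<lambda>k. real k ^ n * hweight bs2 cs (snd eta) k)"
    and minors: "\<forall>eta\<in>U. \<forall>n. det (lead_block (moment bs1 bs2 cs eta) n) \<noteq> 0"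
    and S_lu: "\<forall>eta\<in>U. lower_unitri (S eta)"
    and St_lu: "\<forall>eta\<in>U. lower_unitri (St eta)"
    and H_diag: "\<forall>eta\<in>U. diagonal_m (H eta)"
    and GB: "\<forall>eta\<in>U. moment bs1 bs2 cs eta
               = mmul (mmul (linv (S eta)) (H eta)) (mtr (linv (St eta)))"
  defines "T \<equiv> (\<lambda>eta. mmul (mmul (S eta) Lam) (linv (S eta)))"
    and "phi \<equiv> mmul (thetaM S eta0) (linv (S eta0))"
  shows "thetaM T eta0 = comm phi (T eta0)
       \<and> comm phi (T eta0) = comm (Tplus (T eta0)) (T eta0)"
proof -
  note U = U_open eta0_in
  define M where "M = moment bs1 bs2 cs"
  have S0: "lower_unitri (S eta0)" using S_lu U by blast
  have upper: "\<forall>e\<in>U. upper_tri (mmul (S e) (M e))"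
    using S_lu St_lu H_diag GB by (auto simp: M_def intro: upper_tri_gauss_borel)
  have M_diff: "\<And>i j. partially_differentiable (\<lambda>e. M e i j) eta0"
    and thetaM_M: "thetaM M eta0 = mmul Lam (M eta0)"
    using theta_moment[OF U conv1 conv2] by (simp_all add: M_def thetaM_def fun_eq_iff Lam_mmul)
  have S_diff: "\<And>i j. partially_differentiable (\<lambda>e. S e i j) eta0"
    using partially_differentiable_lower_factor[OF U S_lu upper _ M_diff] minors by (simp add: M_def)
  have lax: "thetaM T eta0 = comm phi (T eta0)"
    unfolding T_def phi_def by (rule thetaM_dressing[OF U S_lu S_diff row_finite_Lam])
  note dS = thetaM_lower_unitri[OF U S_lu]
  have "\<forall>e\<in>U. row_bounded (S e) Suc" using S_lu row_bounded_lower_unitri by blast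
  then have "upper_tri (madd (mmul (thetaM S eta0) (M eta0)) (mmul (S eta0) (mmul Lam (M eta0))))"
    using thetaM_upper_tri[OF U upper] thetaM_mmul[OF U _ S_diff M_diff] thetaM_M by simp
  moreover have "mmul (S eta0) (M eta0) j j \<noteq> 0" for j
    using diag_nonzero_of_minors[OF S0] upper minors U by (simp add: M_def)
  ultimately have "phi = (\<lambda>i j. - Tminus (T eta0) i j)"
    unfolding phi_def T_def using upper U
    by (intro dressing_derivative_eq_neg_Tminus[OF S0 dS]) (auto simp: M_def moment_def)
  then have "Tplus (T eta0) = madd phi (T eta0)"
    by (simp add: Tplus_def msub_def madd_def fun_eq_iff)
  moreover have "row_finite phi" "row_finite (T eta0)"
    using S0 lower_unitri_linv row_finiteI[OF dS(1)]
    by (simp_all add: phi_def T_def row_finite_mmul row_finite_lower_unitri row_finite_Lam)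
  ultimately show ?thesis using lax comm_madd_left_self by simp
qed

end
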